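(* Let $\beta\in\mathbb{C}$ be a root of $X^4+2$ and $K=\mathbb{Q}(\beta)$ with ring of integers $\mathcal{O}_K$. For every $d\in\mathbb{Z}$, every prime ideal of $\mathcal{O}_K$ dividing $d-\beta$ has residue degree $1$. *)

theory Defs
  imports Complex_Main "HOL-Computational_Algebra.Polynomial"
begin

definition algebraic_int :: "complex \<Rightarrow> bool" where
  "algebraic_int x \<longleftrightarrow>
     (\<exists>p :: int poly. lead_coeff p = 1 \<and> poly (map_poly of_int p) x = 0)"

text \<open>The number field Q(beta) inside C, for beta a root of X^4 + 2 (degree 4,
  so Q(beta) is the Q-span of 1, beta, beta^2, beta^3).\<close>
definition QF :: "complex \<Rightarrow> complex set" where
  "QF \<beta> = {of_rat a0 + of_rat a1 * \<beta> + of_rat a2 * \<beta>^2 + of_rat a3 * \<beta>^3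
             | a0 a1 a2 a3. True}"

definition OK :: "complex \<Rightarrow> complex set" where
  "OK \<beta> = {x \<in> QF \<beta>. algebraic_int x}"

definition is_ideal :: "complex set \<Rightarrow> complex set \<Rightarrow> bool" where
  "is_ideal R I \<longleftrightarrow> I \<subseteq> R \<and> 0 \<in> I \<and>
     (\<forall>x\<in>I. \<forall>y\<in>I. x + y \<in> I) \<and> (\<forall>x\<in>I. - x \<in> I) \<and>
     (\<forall>r\<in>R. \<forall>x\<in>I. r * x \<in> I)"

definition is_prime_ideal :: "complex set \<Rightarrow> complex set \<Rightarrow> bool" where
  "is_prime_ideal R P \<longleftrightarrow> is_ideal R P \<and> P \<noteq> R \<and>
     (\<forall>x\<in>R. \<forall>y\<in>R. x * y \<in> P \<longrightarrow> x \<in> P \<or> y \<in> P)"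

definition quot_classes :: "complex set \<Rightarrow> complex set \<Rightarrow> complex set set" where
  "quot_classes R P = (\<lambda>x. (\<lambda>y. x + y) ` P) ` R"

definition prime_below :: "complex set \<Rightarrow> nat" where
  "prime_below P = (THE p. prime p \<and> of_nat p \<in> P)"

definition residue_degree :: "complex set \<Rightarrow> complex set \<Rightarrow> nat" where
  "residue_degree R P = (THE f. card (quot_classes R P) = prime_below P ^ f)"

end

theory Submission
  imports Defs
begin

text \<open>The norm \<open>d\<^sup>4 + 2\<close> of \<open>d - \<beta>\<close> lies in \<open>P\<close>, so \<open>P\<close> lies over a rational prime \<open>p\<close>.
  The order \<open>\<int>[\<beta>]\<close> is maximal at every prime: at odd \<open>p\<close> because \<open>X\<^sup>4 + 2\<close> is squarefree
  modulo \<open>p\<close>, so \<open>p \<int>[\<beta>]\<close> is radical, and at \<open>p = 2\<close> because \<open>X\<^sup>4 + 2\<close> is Eisenstein.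
  Hence every \<open>x \<in> \<O>\<^sub>K\<close> has a multiple \<open>m x = h(\<beta>) \<in> \<int>[\<beta>]\<close> with \<open>p \<nmid> m\<close>, and
  \<open>h(\<beta>) \<equiv> h(d)\<close> modulo \<open>P\<close>. Inverting \<open>m\<close> modulo \<open>p\<close> shows that every residue class
  contains an integer, so \<open>\<O>\<^sub>K/P\<close> has exactly \<open>p\<close> elements.\<close>

lemma algebraic_int_power_eq:
  assumes "algebraic_int x"
  obtains n :: nat and g :: "nat \<Rightarrow> int"
  where "n \<ge> 1" "x ^ n = (\<Sum>k<n. of_int (g k) * x ^ k)"
proof -
  obtain F :: "int poly" where F: "lead_coeff F = 1" "poly (map_poly of_int F) x = 0"
    using assms unfolding algebraic_int_def by blast
  define n where "n = degree F"
  have "degree (map_poly (of_int :: int \<Rightarrow> complex) F) = n"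
    unfolding n_def by (rule degree_map_poly) simp
  then have sum0: "(\<Sum>k\<le>n. of_int (coeff F k) * x ^ k) = 0"
    using F(2) by (simp add: poly_altdef coeff_map_poly)
  have "n \<noteq> 0"
    using sum0 F(1) by (cases "degree F = 0") (auto simp: n_def)
  moreover have "x ^ n = (\<Sum>k<n. of_int (- coeff F k) * x ^ k)"
    using sum0 F(1) unfolding n_def
    by (simp add: lessThan_Suc_atMost[symmetric] sum_negf eq_neg_iff_add_eq_0 add.commute)
  ultimately show ?thesis
    using that[of n "\<lambda>k. - coeff F k"] by simp
qed

lemma monic_relation_scale:
  fixes x c :: "'a::comm_ring_1"
  assumes "x ^ n = (\<Sum>k<n. of_int (g k) * x ^ k)"
  shows "(c * x) ^ n = (\<Sum>k<n. of_int (g k) * c ^ (n - k) * (c * x) ^ k)"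
proof -
  have "(c * x) ^ n = (\<Sum>k<n. of_int (g k) * (c ^ (n - k) * c ^ k) * x ^ k)"
    using assms by (simp add: power_mult_distrib sum_distrib_left algebra_simps power_add[symmetric])
  then show ?thesis
    by (simp add: power_mult_distrib algebra_simps)
qed

lemma prime_ideal_one_notin:
  assumes "is_prime_ideal R P"
  shows "1 \<notin> P"
proof
  assume "1 \<in> P"
  then have "R \<subseteq> P"
    using assms unfolding is_prime_ideal_def is_ideal_def by (metis mult.right_neutral subsetI)
  with assms show False
    unfolding is_prime_ideal_def is_ideal_def by blast
qed

lemma prime_ideal_contains_prime:
  assumes P: "is_prime_ideal R P" and ints: "\<And>k. of_int k \<in> R"
    and N: "of_int N \<in> P" "N \<noteq> 0"
  obtains p :: nat where "prime p" "of_nat p \<in> P"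
proof -
  have "\<exists>q. prime q \<and> of_int q \<in> P" if "of_int M \<in> P" "M \<noteq> 0" for M
    using that
  proof (induction "nat \<bar>M\<bar>" arbitrary: M rule: less_induct)
    case less
    have "\<not> is_unit M"
    proof
      assume "is_unit M"
      then have "M = 1 \<or> M = -1"
        by auto
      then have "M * M = 1"
        by auto
      then show False
        using P ints less.prems(1) prime_ideal_one_notin[OF P]
        unfolding is_prime_ideal_def is_ideal_def by (metis of_int_1 of_int_mult)
    qed
    then obtain q where q: "prime q" "q dvd M"
      using prime_divisor_exists less.prems(2) by blast
    then obtain M' where M: "M = q * M'"
      by blast
    then have "of_int q \<in> P \<or> of_int M' \<in> P"
      using P ints less.prems(1) unfolding is_prime_ideal_def by (metis of_int_mult)
    moreover have "nat \<bar>M'\<bar> < nat \<bar>M\<bar>" "M' \<noteq> 0"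
      using M less.prems(2) prime_gt_1_int[OF q(1)] by (auto simp: abs_mult)
    ultimately show ?case
      using q(1) less.hyps by blast
  qed
  then obtain q where q: "prime q" "of_int q \<in> P"
    using N by blast
  moreover have "int (nat q) = q"
    using prime_gt_0_int[OF q(1)] by simp
  ultimately show ?thesis
    using that[of "nat q"] prime_int_nat_transfer by (metis of_int_of_nat_eq)
qed

lemma ideal_int_members:
  assumes P: "is_ideal R P" "1 \<notin> P" and ints: "\<And>k. of_int k \<in> R"
    and p: "prime p" "of_nat p \<in> P"
  shows "of_int k \<in> P \<longleftrightarrow> int p dvd k"
proof
  have P_mult: "of_int a * x \<in> P" if "x \<in> P" for a x
    using P ints that unfolding is_ideal_def by blast
  assume k: "of_int k \<in> P"
  show "int p dvd k"
  proof (rule ccontr)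
    assume "\<not> int p dvd k"
    then obtain s t where "s * int p + t * k = 1"
      using prime_imp_coprime[of "int p" k] bezout_int[of "int p" k] p(1) by auto
    then have "1 = of_int s * of_nat p + of_int t * (of_int k :: complex)"
      by (metis of_int_1 of_int_add of_int_mult of_int_of_nat_eq)
    moreover have "of_int s * of_nat p + of_int t * of_int k \<in> P"
      using P(1) P_mult[OF p(2)] P_mult[OF k] unfolding is_ideal_def by blast
    ultimately show False
      using P(2) by simp
  qed
next
  assume "int p dvd k"
  then obtain c where "k = int p * c" ..
  then have "of_int k = of_int c * (of_nat p :: complex)"
    by simp
  then show "of_int k \<in> P"
    using P ints p(2) unfolding is_ideal_def by simp
qed

lemma coset_eq_iff:
  assumes "is_ideal R P"
  shows "(\<lambda>y. x + y) ` P = (\<lambda>y. x' + y) ` P \<longleftrightarrow> x - x' \<in> P"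
proof
  assume "(\<lambda>y. x + y) ` P = (\<lambda>y. x' + y) ` P"
  moreover have "x + 0 \<in> (\<lambda>y. x + y) ` P"
    using assms unfolding is_ideal_def by blast
  ultimately show "x - x' \<in> P"
    by (auto simp: algebra_simps)
next
  assume h: "x - x' \<in> P"
  have "(\<lambda>y. a + y) ` P \<subseteq> (\<lambda>y. a' + y) ` P" if "a - a' \<in> P" for a a'
  proof
    fix z assume "z \<in> (\<lambda>y. a + y) ` P"
    then obtain y where "y \<in> P" "z = a + y" by blast
    moreover have "a - a' + y \<in> P"
      using assms that \<open>y \<in> P\<close> unfolding is_ideal_def by blast
    ultimately show "z \<in> (\<lambda>y. a' + y) ` P"
      by (intro image_eqI[of _ _ "a - a' + y"]) auto
  qed
  moreover have "x' - x \<in> P"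
    using assms h unfolding is_ideal_def by (metis minus_diff_eq)
  ultimately show "(\<lambda>y. x + y) ` P = (\<lambda>y. x' + y) ` P"
    using h by blast
qed

lemma quot_classes_eq_int_classes:
  assumes P: "is_ideal R P" and ints: "\<And>k. of_int k \<in> R" and p: "p > 0"
    and P_int: "\<And>k. of_int k \<in> P \<longleftrightarrow> int p dvd k"
    and cong: "\<And>x. x \<in> R \<Longrightarrow> \<exists>k. x - of_int k \<in> P"
  shows "quot_classes R P = (\<lambda>k. (\<lambda>y. of_nat k + y) ` P) ` {..<p}"
proof (intro equalityI subsetI)
  fix C assume "C \<in> quot_classes R P"
  then obtain x where x: "x \<in> R" "C = (\<lambda>y. x + y) ` P"
    unfolding quot_classes_def by blast
  obtain k where "x - of_int k \<in> P"
    using cong[OF x(1)] by blast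
  moreover have "of_int (k - k mod int p) \<in> P"
    using P_int[of "k - k mod int p"] by (simp add: mod_eq_dvd_iff)
  ultimately have "(x - of_int k) + of_int (k - k mod int p) \<in> P"
    using P unfolding is_ideal_def by blast
  then have "x - of_nat (nat (k mod int p)) \<in> P"
    using p by simp
  then have "C = (\<lambda>y. of_nat (nat (k mod int p)) + y) ` P"
    using x(2) coset_eq_iff[OF P] by blast
  moreover have "nat (k mod int p) < p"
    using p by (simp add: nat_less_iff)
  ultimately show "C \<in> (\<lambda>k. (\<lambda>y. of_nat k + y) ` P) ` {..<p}"
    by blast
next
  fix C assume "C \<in> (\<lambda>k. (\<lambda>y. of_nat k + y) ` P) ` {..<p}"
  then show "C \<in> quot_classes R P"
    unfolding quot_classes_def using ints[of "int _"] by auto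
qed

lemma card_quot_classes:
  assumes P: "is_ideal R P" and "\<And>k. of_int k \<in> R" and "p > 0"
    and P_int: "\<And>k. of_int k \<in> P \<longleftrightarrow> int p dvd k"
    and "\<And>x. x \<in> R \<Longrightarrow> \<exists>k. x - of_int k \<in> P"
  shows "card (quot_classes R P) = p"
proof -
  have inj: "inj_on (\<lambda>k. (\<lambda>y. of_nat k + y) ` P) {..<p}"
  proof (rule inj_onI)
    fix k k' assume "k \<in> {..<p}" "k' \<in> {..<p}" "(\<lambda>y. of_nat k + y) ` P = (\<lambda>y. of_nat k' + y) ` P"
    then have dvd: "int p dvd int k - int k'" and small: "\<bar>int k - int k'\<bar> < int p"
      using coset_eq_iff[OF P] P_int[of "int k - int k'"] by auto
    show "k = k'"
    proof (rule ccontr)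
      assume "k \<noteq> k'"
      then have "int p \<le> \<bar>int k - int k'\<bar>"
        using dvd_imp_le_int[OF _ dvd] by simp
      with small show False
        by simp
    qed
  qed
  show ?thesis
    using card_image[OF inj] quot_classes_eq_int_classes[OF assms] by simp
qed

lemma prime_below_eq:
  assumes p: "prime p" and P_int: "\<And>k. of_int k \<in> P \<longleftrightarrow> int p dvd k"
  shows "prime_below P = p"
  unfolding prime_below_def
proof (rule the_equality)
  fix q assume q: "prime q \<and> of_nat q \<in> P"
  then have "p dvd q"
    using P_int[of "int q"] by simp
  then show "q = p"
    using p q primes_dvd_imp_eq by blast
qed (use p P_int[of "int p"] in simp)

lemma residue_degree_eq_1:
  assumes P: "is_ideal R P" and ints: "\<And>k. of_int k \<in> R" and p: "prime p"
    and P_int: "\<And>k. of_int k \<in> P \<longleftrightarrow> int p dvd k"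
    and cong: "\<And>x. x \<in> R \<Longrightarrow> \<exists>k. x - of_int k \<in> P"
  shows "residue_degree R P = 1"
proof -
  have card: "card (quot_classes R P) = prime_below P ^ 1"
    using prime_below_eq[OF p P_int] card_quot_classes[OF P ints prime_gt_0_nat[OF p] P_int cong]
    by simp
  show ?thesis
    unfolding residue_degree_def
  proof (rule the_equality)
    fix f assume "card (quot_classes R P) = prime_below P ^ f"
    then have "p ^ f = p ^ 1"
      using card prime_below_eq[OF p P_int] by simp
    then show "f = 1"
      using prime_gt_1_nat[OF p] power_inject_exp by metis
  qed (fact card)
qed

lemma rat_square_neq_2: "(r::rat)^2 \<noteq> 2"
proof
  assume h: "r^2 = 2"
  have "r \<in> \<rat>"
    by (metis Rats_of_rat of_rat_eq_id id_apply)
  then obtain a b where "b > 0" and "coprime a b" and r: "r = of_int a / of_int b"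
    by (rule Rats_cases')
  then have "of_int a ^ 2 = (2::rat) * of_int b ^ 2"
    using h by (simp add: r power_divide field_simps)
  then have ab: "a^2 = 2 * b^2"
    by (metis of_int_eq_iff of_int_mult of_int_numeral of_int_power)
  then have "even a"
    by (metis dvd_triv_left even_power zero_less_numeral)
  then obtain k where "a = 2 * k" by blast
  with ab have "b^2 = 2 * k^2"
    by (simp add: power_mult_distrib)
  then have "even b"
    by (metis dvd_triv_left even_power zero_less_numeral)
  with \<open>even a\<close> \<open>coprime a b\<close> show False
    by (metis coprime_common_divisor odd_one)
qed

lemma sqrt_neg2_rat_independent:
  fixes s :: complex
  assumes s: "s^2 = -2" and eq: "of_rat r1 + of_rat r2 * s = 0"
  shows "r1 = 0 \<and> r2 = 0"
proof (cases "r2 = 0")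
  case True
  with eq show ?thesis by simp
next
  case False
  define t where "t = - r1 / r2"
  have "s = of_rat t"
    using eq False unfolding t_def
    by (simp add: of_rat_divide of_rat_minus field_simps eq_neg_iff_add_eq_0 add.commute)
  then have "of_rat (t^2) = (of_rat (-2) :: complex)"
    using s by (simp add: of_rat_power)
  then have "t^2 = -2"
    using of_rat_eq_iff by blast
  moreover have "t^2 \<ge> 0" by simp
  ultimately show ?thesis by simp
qed

lemma odd_prime_dvd_double_iff:
  fixes q x :: int
  assumes "prime q" "odd q"
  shows "q dvd 2 * x \<longleftrightarrow> q dvd x"
proof -
  have "\<not> q dvd 2"
    using assms prime_ge_2_int[OF assms(1)] zdvd_imp_le[of q 2] by (cases "q = 2") auto
  then show ?thesis
    using assms(1) prime_dvd_mult_iff by auto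
qed

text \<open>The coordinates of \<open>(a + c \<surd>-2)\<^sup>2\<close> are \<open>a\<^sup>2 - 2c\<^sup>2\<close> and \<open>2ac\<close>.\<close>
lemma odd_prime_dvd_sqrt_neg2_square:
  fixes q a c :: int
  assumes q: "prime q" "odd q" and re: "q dvd a^2 - 2 * c^2" and im: "q dvd 2 * a * c"
  shows "q dvd a \<and> q dvd c"
proof -
  have "q dvd a \<or> q dvd c"
    using im odd_prime_dvd_double_iff[OF q, of "a * c"] q(1) prime_dvd_mult_iff
    by (auto simp: mult.assoc)
  moreover have "q dvd a^2 \<longleftrightarrow> q dvd 2 * c^2"
    using re by (metis dvd_add_right_iff diff_add_cancel)
  ultimately show ?thesis
    using odd_prime_dvd_double_iff[OF q] prime_dvd_power_iff[OF q(1)] by auto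
qed

text \<open>Write \<open>A = c\<^sub>0 + c\<^sub>2 s\<close>, \<open>B = c\<^sub>1 + c\<^sub>3 s\<close> with \<open>s = \<beta>\<^sup>2 = \<surd>-2\<close>. The hypotheses are the
  coordinates of \<open>(A + \<beta> B)\<^sup>2\<close>, i.e.\ of \<open>A\<^sup>2 + s B\<^sup>2\<close> and \<open>2AB\<close>; the combinations
  \<open>X\<^sub>0, X\<^sub>1\<close> are the coordinates of \<open>A\<^sup>3\<close>. Thus \<open>q\<close> divides \<open>A\<^sup>3\<close>, hence \<open>A\<^sup>4\<close>, hence
  \<open>A\<^sup>2\<close> and \<open>A\<close>, and finally \<open>B\<close>.\<close>
lemma odd_prime_dvd_power_basis_square:
  fixes q c0 c1 c2 c3 :: int
  assumes q: "prime q" "odd q"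
    and E0: "q dvd c0*c0 - 2*(c1*c3 + c2*c2 + c3*c1)"
    and E1: "q dvd c0*c1 + c1*c0 - 2*(c2*c3 + c3*c2)"
    and E2: "q dvd c0*c2 + c1*c1 + c2*c0 - 2*c3*c3"
    and E3: "q dvd c0*c3 + c1*c2 + c2*c1 + c3*c0"
  shows "q dvd c0 \<and> q dvd c1 \<and> q dvd c2 \<and> q dvd c3"
proof -
  define e0 where "e0 = c0*c0 - 2*(c1*c3 + c2*c2 + c3*c1)"
  define e2 where "e2 = c0*c2 + c1*c1 + c2*c0 - 2*c3*c3"
  define e1 where "e1 = c0*c1 - 2*c2*c3"
  define e3 where "e3 = c0*c3 + c1*c2"
  have d0: "q dvd e0" and d2: "q dvd e2"
    using E0 E2 unfolding e0_def e2_def .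
  have "q dvd 2 * e1" "q dvd 2 * e3"
    using E1 E3 unfolding e1_def e3_def by (simp_all add: algebra_simps)
  then have d1: "q dvd e1" and d3: "q dvd e3"
    using odd_prime_dvd_double_iff[OF q] by auto
  define X0 where "X0 = c0^3 - 6*c0*c2^2"
  define X1 where "X1 = 3*c0^2*c2 - 2*c2^3"
  have "X0 = c0*e0 - 2*c2*e2 + 2*c3*e1 + 2*c1*e3"
    unfolding X0_def e0_def e1_def e2_def e3_def by algebra
  then have dX0: "q dvd X0"
    using d0 d1 d2 d3 by (simp only: dvd_add dvd_diff dvd_mult)
  have "X1 = c0*e2 + c2*e0 - c1*e1 + 2*c3*e3"
    unfolding X1_def e0_def e1_def e2_def e3_def by algebra
  then have dX1: "q dvd X1"
    using d0 d1 d2 d3 by (simp only: dvd_add dvd_diff dvd_mult)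
  have "(c0^2 - 2*c2^2)^2 - 2*(2*c0*c2)^2 = c0*X0 - 2*c2*X1"
    "2 * (c0^2 - 2*c2^2) * (2*c0*c2) = c0*X1 + c2*X0"
    unfolding X0_def X1_def by algebra+
  then have "q dvd c0^2 - 2*c2^2" "q dvd 2*c0*c2"
    using odd_prime_dvd_sqrt_neg2_square[OF q, of "c0^2 - 2*c2^2" "2*c0*c2"] dX0 dX1 by simp_all
  then have A: "q dvd c0" "q dvd c2"
    using odd_prime_dvd_sqrt_neg2_square[OF q] by blast+
  have "2 * (2 * (c1 * c3)) = (c0^2 - 2*c2^2) - e0" "c1^2 - 2*c3^2 = e2 - 2*(c0*c2)"
    unfolding e0_def e2_def by algebra+
  moreover have "q dvd (c0^2 - 2*c2^2) - e0" "q dvd e2 - 2*(c0*c2)"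
    using A d0 d2 by (simp_all add: dvd_diff power2_eq_square)
  ultimately have "q dvd 2 * c1 * c3" "q dvd c1^2 - 2*c3^2"
    using odd_prime_dvd_double_iff[OF q, of "2 * (c1 * c3)"] by (simp_all add: mult.assoc)
  then show ?thesis
    using A odd_prime_dvd_sqrt_neg2_square[OF q] by blast
qed

locale X4_plus_2_root =
  fixes \<beta> :: complex
  assumes root: "\<beta> ^ 4 + 2 = 0"
begin

lemma beta4: "\<beta> ^ 4 = -2"
  using root by (simp add: eq_neg_iff_add_eq_0)

lemma beta_nonzero: "\<beta> \<noteq> 0"
  using root by auto

lemma beta_notin_rat_span_beta_square: "\<beta> \<noteq> of_rat r1 + of_rat r2 * \<beta>^2"
proof
  define s where "s = \<beta>^2"
  have s2: "s^2 = -2"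
    using beta4 unfolding s_def by algebra
  assume beta: "\<beta> = of_rat r1 + of_rat r2 * \<beta>^2"
  have "of_rat (r1^2 - 2 * r2^2) + of_rat (2 * r1 * r2 - 1) * s = (of_rat r1 + of_rat r2 * s)^2 - s"
    using s2 by (simp add: of_rat_add of_rat_mult of_rat_diff of_rat_power) algebra
  also have "\<dots> = 0"
    using beta s_def by simp
  finally have "r1^2 - 2 * r2^2 = 0 \<and> 2 * r1 * r2 - 1 = 0"
    using sqrt_neg2_rat_independent[OF s2] by blast
  then have "(r1 / r2)^2 = 2"
    by (auto simp: power_divide)
  with rat_square_neq_2 show False
    by blast
qed

lemma power_basis_rat_independent:
  assumes "of_rat a0 + of_rat a1 * \<beta> + of_rat a2 * \<beta>^2 + of_rat a3 * \<beta>^3 = 0"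
  shows "a0 = 0 \<and> a1 = 0 \<and> a2 = 0 \<and> a3 = 0"
proof -
  define s where "s = \<beta>^2"
  have s2: "s^2 = -2"
    using beta4 unfolding s_def by algebra
  have split: "\<beta> * (of_rat a1 + of_rat a3 * s) = - (of_rat a0 + of_rat a2 * s)"
    using assms unfolding s_def by algebra
  show ?thesis
  proof (cases "a1 = 0 \<and> a3 = 0")
    case True
    then have "of_rat a0 + of_rat a2 * s = 0"
      using split by (simp add: neg_eq_iff_add_eq_0 add.commute)
    with sqrt_neg2_rat_independent[OF s2] True show ?thesis
      by blast
  next
    case False
    define D where "D = a1^2 + 2 * a3^2"
    have "D > 0"
      unfolding D_def using False
      by (cases "a1 = 0") (auto intro: add_pos_nonneg add_nonneg_pos)
    define r1 where "r1 = - (a0 * a1 + 2 * a2 * a3) / D"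
    define r2 where "r2 = - (a1 * a2 - a0 * a3) / D"
    have "\<beta> * of_rat D = \<beta> * (of_rat a1 + of_rat a3 * s) * (of_rat a1 - of_rat a3 * s)"
      unfolding D_def using s2 by (simp add: of_rat_add of_rat_mult of_rat_power) algebra
    also have "\<dots> = - (of_rat a0 + of_rat a2 * s) * (of_rat a1 - of_rat a3 * s)"
      using split by simp
    also have "\<dots> = (of_rat r1 + of_rat r2 * s) * of_rat D"
      using s2 \<open>D > 0\<close> unfolding r1_def r2_def
      by (simp add: of_rat_add of_rat_mult of_rat_minus of_rat_diff of_rat_divide field_simps) algebra
    finally have "\<beta> = of_rat r1 + of_rat r2 * \<beta>^2"
      using \<open>D > 0\<close> unfolding s_def by simp
    with beta_notin_rat_span_beta_square show ?thesis
      by blast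
  qed
qed

definition Zbeta_of :: "int \<Rightarrow> int \<Rightarrow> int \<Rightarrow> int \<Rightarrow> complex" where
  "Zbeta_of a0 a1 a2 a3 = of_int a0 + of_int a1 * \<beta> + of_int a2 * \<beta>^2 + of_int a3 * \<beta>^3"

definition Zbeta :: "complex set" where
  "Zbeta = {Zbeta_of a0 a1 a2 a3 | a0 a1 a2 a3. True}"

lemma Zbeta_of_in_Zbeta [simp]: "Zbeta_of a0 a1 a2 a3 \<in> Zbeta"
  unfolding Zbeta_def by blast

lemma ZbetaE:
  assumes "z \<in> Zbeta"
  obtains a0 a1 a2 a3 where "z = Zbeta_of a0 a1 a2 a3"
  using assms unfolding Zbeta_def by blast

lemma Zbeta_of_eq_iff:
  "Zbeta_of a0 a1 a2 a3 = Zbeta_of c0 c1 c2 c3 \<longleftrightarrow> a0 = c0 \<and> a1 = c1 \<and> a2 = c2 \<and> a3 = c3"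
proof
  assume "Zbeta_of a0 a1 a2 a3 = Zbeta_of c0 c1 c2 c3"
  then have "of_rat (of_int (a0 - c0)) + of_rat (of_int (a1 - c1)) * \<beta>
      + of_rat (of_int (a2 - c2)) * \<beta>^2 + of_rat (of_int (a3 - c3)) * \<beta>^3 = 0"
    unfolding Zbeta_of_def by (simp add: of_rat_diff of_rat_of_int_eq algebra_simps)
  from power_basis_rat_independent[OF this] show "a0 = c0 \<and> a1 = c1 \<and> a2 = c2 \<and> a3 = c3"
    by simp
qed simp

lemma Zbeta_of_add:
  "Zbeta_of a0 a1 a2 a3 + Zbeta_of c0 c1 c2 c3 = Zbeta_of (a0 + c0) (a1 + c1) (a2 + c2) (a3 + c3)"
  unfolding Zbeta_of_def by (simp add: algebra_simps)

lemma Zbeta_of_uminus: "- Zbeta_of a0 a1 a2 a3 = Zbeta_of (- a0) (- a1) (- a2) (- a3)"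
  unfolding Zbeta_of_def by (simp add: algebra_simps)

lemma Zbeta_of_mult:
  "Zbeta_of a0 a1 a2 a3 * Zbeta_of c0 c1 c2 c3 =
     Zbeta_of (a0*c0 - 2*(a1*c3 + a2*c2 + a3*c1)) (a0*c1 + a1*c0 - 2*(a2*c3 + a3*c2))
              (a0*c2 + a1*c1 + a2*c0 - 2*a3*c3) (a0*c3 + a1*c2 + a2*c1 + a3*c0)"
  unfolding Zbeta_of_def using beta4 by simp algebra

lemma Zbeta_of_int [simp]: "of_int k \<in> Zbeta"
  using Zbeta_of_in_Zbeta[of k 0 0 0] by (simp add: Zbeta_of_def)

lemma Zbeta_beta [simp]: "\<beta> \<in> Zbeta"
  using Zbeta_of_in_Zbeta[of 0 1 0 0] by (simp add: Zbeta_of_def)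

lemma Zbeta_0 [simp]: "0 \<in> Zbeta"
  using Zbeta_of_int[of 0] by simp

lemma Zbeta_1 [simp]: "1 \<in> Zbeta"
  using Zbeta_of_int[of 1] by simp

lemma Zbeta_add: "x \<in> Zbeta \<Longrightarrow> y \<in> Zbeta \<Longrightarrow> x + y \<in> Zbeta"
  by (metis ZbetaE Zbeta_of_add Zbeta_of_in_Zbeta)

lemma Zbeta_uminus: "x \<in> Zbeta \<Longrightarrow> - x \<in> Zbeta"
  by (metis ZbetaE Zbeta_of_uminus Zbeta_of_in_Zbeta)

lemma Zbeta_diff: "x \<in> Zbeta \<Longrightarrow> y \<in> Zbeta \<Longrightarrow> x - y \<in> Zbeta"
  using Zbeta_add[OF _ Zbeta_uminus, of x y] by simp

lemma Zbeta_mult: "x \<in> Zbeta \<Longrightarrow> y \<in> Zbeta \<Longrightarrow> x * y \<in> Zbeta"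
  by (metis ZbetaE Zbeta_of_mult Zbeta_of_in_Zbeta)

lemma Zbeta_power: "x \<in> Zbeta \<Longrightarrow> x ^ n \<in> Zbeta"
  by (induction n) (auto simp: Zbeta_mult)

lemma Zbeta_subset_QF: "Zbeta \<subseteq> QF \<beta>"
proof
  fix z assume "z \<in> Zbeta"
  then obtain a0 a1 a2 a3 where "z = Zbeta_of a0 a1 a2 a3"
    by (rule ZbetaE)
  then have "z = of_rat (of_int a0) + of_rat (of_int a1) * \<beta> + of_rat (of_int a2) * \<beta>^2
      + of_rat (of_int a3) * \<beta>^3"
    unfolding Zbeta_of_def by (simp only: of_rat_of_int_eq)
  then show "z \<in> QF \<beta>"
    unfolding QF_def by blast
qed

text \<open>\<open>z\<close> is a root of the monic quadratic \<open>f + \<beta>\<^sup>2 g\<close> over \<open>\<int>[\<beta>\<^sup>2]\<close>, with \<open>f, g\<close> integer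
  polynomials; multiplying by the conjugate \<open>f - \<beta>\<^sup>2 g\<close> gives the monic integer quartic
  \<open>f\<^sup>2 + 2 g\<^sup>2\<close>.\<close>
lemma Zbeta_algebraic_int:
  assumes "z \<in> Zbeta"
  shows "algebraic_int z"
proof -
  obtain c0 c1 c2 c3 where z: "z = Zbeta_of c0 c1 c2 c3"
    using assms by (rule ZbetaE)
  define a where "a = -2 * c0"
  define b where "b = c0^2 - 2 * c2^2 + 4 * c1 * c3"
  define u where "u = -2 * c2"
  define v where "v = 2 * c0 * c2 - c1^2 + 2 * c3^2"
  define f where "f = z^2 + of_int a * z + of_int b"
  define g where "g = of_int u * z + of_int v"
  have "f + \<beta>^2 * g = 0"
    unfolding f_def g_def a_def b_def u_def v_def z Zbeta_of_def using beta4 by simp algebra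
  then have "f^2 = (\<beta>^2)^2 * g^2"
    by (simp add: eq_neg_iff_add_eq_0[symmetric] power_mult_distrib)
  then have fg: "f^2 + 2 * g^2 = 0"
    using beta4 by (simp add: power_mult[symmetric])
  define p :: "int poly"
    where "p = [: b^2 + 2 * v^2, 2 * a * b + 4 * u * v, a^2 + 2 * b + 2 * u^2, 2 * a, 1 :]"
  have "poly (map_poly of_int p) z = f^2 + 2 * g^2"
    unfolding p_def f_def g_def
    by (simp add: map_poly_pCons algebra_simps power2_eq_square power3_eq_cube power4_eq_xxxx)
  moreover have "lead_coeff p = 1"
    unfolding p_def by simp
  ultimately show ?thesis
    unfolding algebraic_int_def using fg by (intro exI[of _ p]) simp
qed

lemma Zbeta_subset_OK: "Zbeta \<subseteq> OK \<beta>"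
  unfolding OK_def using Zbeta_subset_QF Zbeta_algebraic_int by blast

lemma OK_of_int: "of_int k \<in> OK \<beta>"
  using Zbeta_subset_OK by auto

lemma QF_denominator:
  assumes "x \<in> QF \<beta>"
  obtains m :: nat where "m > 0" "of_nat m * x \<in> Zbeta"
proof -
  obtain a0 a1 a2 a3 where x: "x = of_rat a0 + of_rat a1 * \<beta> + of_rat a2 * \<beta>^2 + of_rat a3 * \<beta>^3"
    using assms unfolding QF_def by blast
  have fraction: "\<exists>n d. d > 0 \<and> r = of_int n / of_int d" for r :: rat
    using Rats_cases'[of r] by (metis Rats_of_rat of_rat_eq_id id_apply)
  obtain n0 d0 n1 d1 n2 d2 n3 d3 where
    "d0 > 0" "a0 = of_int n0 / of_int d0" "d1 > 0" "a1 = of_int n1 / of_int d1"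
    "d2 > 0" "a2 = of_int n2 / of_int d2" "d3 > 0" "a3 = of_int n3 / of_int d3"
    using fraction by metis
  moreover define D where "D = d0 * d1 * d2 * d3"
  ultimately have "D > 0" and
    r: "of_int D * a0 = of_int (n0*d1*d2*d3)" "of_int D * a1 = of_int (n1*d0*d2*d3)"
       "of_int D * a2 = of_int (n2*d0*d1*d3)" "of_int D * a3 = of_int (n3*d0*d1*d2)"
    by (simp_all add: field_simps)
  have "of_int D * x = of_rat (of_int D * a0) + of_rat (of_int D * a1) * \<beta>
      + of_rat (of_int D * a2) * \<beta>^2 + of_rat (of_int D * a3) * \<beta>^3"
    unfolding x by (simp add: of_rat_mult of_rat_of_int_eq algebra_simps)
  also have "\<dots> = Zbeta_of (n0*d1*d2*d3) (n1*d0*d2*d3) (n2*d0*d1*d3) (n3*d0*d1*d2)"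
    unfolding r Zbeta_of_def by (simp only: of_rat_of_int_eq)
  finally have "of_int D * x = \<dots>" .
  then show ?thesis
    using that[of "nat D"] \<open>D > 0\<close> by simp
qed

definition Zbeta_ideal :: "complex \<Rightarrow> complex set" where
  "Zbeta_ideal a = (\<lambda>z. a * z) ` Zbeta"

lemma Zbeta_idealI: "z \<in> Zbeta \<Longrightarrow> a * z \<in> Zbeta_ideal a"
  unfolding Zbeta_ideal_def by blast

lemma Zbeta_idealE:
  assumes "x \<in> Zbeta_ideal a"
  obtains z where "z \<in> Zbeta" "x = a * z"
  using assms unfolding Zbeta_ideal_def by blast

lemma Zbeta_ideal_add: "x \<in> Zbeta_ideal a \<Longrightarrow> y \<in> Zbeta_ideal a \<Longrightarrow> x + y \<in> Zbeta_ideal a"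
  by (metis Zbeta_idealE Zbeta_idealI Zbeta_add distrib_left)

lemma Zbeta_ideal_diff: "x \<in> Zbeta_ideal a \<Longrightarrow> y \<in> Zbeta_ideal a \<Longrightarrow> x - y \<in> Zbeta_ideal a"
  by (metis Zbeta_idealE Zbeta_idealI Zbeta_diff right_diff_distrib)

lemma Zbeta_ideal_mult: "x \<in> Zbeta_ideal a \<Longrightarrow> y \<in> Zbeta \<Longrightarrow> y * x \<in> Zbeta_ideal a"
  by (metis Zbeta_idealE Zbeta_idealI Zbeta_mult mult.left_commute)

lemma Zbeta_ideal_sum:
  "(\<And>i. i \<in> A \<Longrightarrow> f i \<in> Zbeta_ideal a) \<Longrightarrow> sum f A \<in> Zbeta_ideal a"
  by (induction A rule: infinite_finite_induct)
    (auto simp: Zbeta_ideal_add intro: Zbeta_idealI[OF Zbeta_0, of a, simplified])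

lemma Zbeta_ideal_mono:
  assumes "b \<in> Zbeta"
  shows "Zbeta_ideal (a * b) \<subseteq> Zbeta_ideal a"
proof
  fix x assume "x \<in> Zbeta_ideal (a * b)"
  then obtain z where "z \<in> Zbeta" "x = a * (b * z)"
    by (auto elim: Zbeta_idealE)
  then show "x \<in> Zbeta_ideal a"
    using Zbeta_idealI Zbeta_mult[OF assms] by simp
qed

lemma Zbeta_ideal_int_iff:
  "Zbeta_of c0 c1 c2 c3 \<in> Zbeta_ideal (of_int q) \<longleftrightarrow> q dvd c0 \<and> q dvd c1 \<and> q dvd c2 \<and> q dvd c3"
proof
  assume "Zbeta_of c0 c1 c2 c3 \<in> Zbeta_ideal (of_int q)"
  then obtain k0 k1 k2 k3 where "Zbeta_of c0 c1 c2 c3 = of_int q * Zbeta_of k0 k1 k2 k3"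
    by (metis Zbeta_idealE ZbetaE)
  also have "\<dots> = Zbeta_of (q * k0) (q * k1) (q * k2) (q * k3)"
    unfolding Zbeta_of_def by (simp add: algebra_simps)
  finally show "q dvd c0 \<and> q dvd c1 \<and> q dvd c2 \<and> q dvd c3"
    unfolding Zbeta_of_eq_iff by auto
next
  assume "q dvd c0 \<and> q dvd c1 \<and> q dvd c2 \<and> q dvd c3"
  then obtain k0 k1 k2 k3 where "c0 = q * k0" "c1 = q * k1" "c2 = q * k2" "c3 = q * k3"
    by (auto elim!: dvdE)
  then have "Zbeta_of c0 c1 c2 c3 = of_int q * Zbeta_of k0 k1 k2 k3"
    unfolding Zbeta_of_def by (simp add: algebra_simps)
  then show "Zbeta_of c0 c1 c2 c3 \<in> Zbeta_ideal (of_int q)"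
    by (simp add: Zbeta_idealI)
qed

text \<open>\<open>q \<int>[\<beta>]\<close> is radical because \<open>X\<^sup>4 + 2\<close> is squarefree modulo odd \<open>q\<close>.\<close>
lemma Zbeta_square_in_odd_prime_ideal:
  assumes q: "prime q" "odd q" and w: "w \<in> Zbeta" and w2: "w^2 \<in> Zbeta_ideal (of_int q)"
  shows "w \<in> Zbeta_ideal (of_int q)"
proof -
  obtain c0 c1 c2 c3 where c: "w = Zbeta_of c0 c1 c2 c3"
    using w by (rule ZbetaE)
  have "w^2 = Zbeta_of (c0*c0 - 2*(c1*c3 + c2*c2 + c3*c1)) (c0*c1 + c1*c0 - 2*(c2*c3 + c3*c2))
                       (c0*c2 + c1*c1 + c2*c0 - 2*c3*c3) (c0*c3 + c1*c2 + c2*c1 + c3*c0)"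
    unfolding power2_eq_square c Zbeta_of_mult ..
  then have "q dvd c0 \<and> q dvd c1 \<and> q dvd c2 \<and> q dvd c3"
    using w2 Zbeta_ideal_int_iff odd_prime_dvd_power_basis_square[OF q] by metis
  then show ?thesis
    unfolding c Zbeta_ideal_int_iff .
qed

lemma Zbeta_power_in_odd_prime_ideal:
  assumes q: "prime q" "odd q"
  shows "w \<in> Zbeta \<Longrightarrow> n \<ge> 1 \<Longrightarrow> w^n \<in> Zbeta_ideal (of_int q) \<Longrightarrow> w \<in> Zbeta_ideal (of_int q)"
proof (induction n arbitrary: w rule: less_induct)
  case (less n)
  show ?case
  proof (cases "n = 1")
    case True
    with less.prems show ?thesis by simp
  next
    case False
    define m where "m = (n + 1) div 2"
    have m: "m < n" "m \<ge> 1" "2 * m \<ge> n"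
      using False less.prems(2) unfolding m_def by auto
    have "(w^m)^2 = w^(2 * m - n) * w^n"
      using m by (simp add: power_mult[symmetric] power_add[symmetric] mult.commute)
    also have "\<dots> \<in> Zbeta_ideal (of_int q)"
      using Zbeta_ideal_mult[OF less.prems(3) Zbeta_power[OF less.prems(1)]] .
    finally have "w^m \<in> Zbeta_ideal (of_int q)"
      using Zbeta_square_in_odd_prime_ideal[OF q Zbeta_power[OF less.prems(1)]] by blast
    then show ?thesis
      using less.IH[OF m(1) less.prems(1) m(2)] by blast
  qed
qed

lemma Zbeta_integral_quotient_odd:
  assumes q: "prime q" "odd q" and w: "w \<in> Zbeta" and n: "n \<ge> 1"
    and eq: "w^n = (\<Sum>k<n. of_int (g k) * of_int q ^ (n - k) * w^k)"
  shows "w \<in> Zbeta_ideal (of_int q)"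
proof -
  have "of_int (g k) * of_int q ^ (n - k) * w^k \<in> Zbeta_ideal (of_int q)" if "k < n" for k
  proof -
    have "(of_int q :: complex) ^ (n - k) = of_int q * of_int q ^ (n - k - 1)"
      using that by (cases "n - k") auto
    then have "of_int (g k) * of_int q ^ (n - k) * w^k = of_int q * (of_int (g k * q ^ (n - k - 1)) * w^k)"
      by simp
    also have "\<dots> \<in> Zbeta_ideal (of_int q)"
      by (intro Zbeta_idealI Zbeta_mult Zbeta_of_int Zbeta_power w)
    finally show ?thesis .
  qed
  then have "w^n \<in> Zbeta_ideal (of_int q)"
    unfolding eq by (intro Zbeta_ideal_sum) simp
  then show ?thesis
    using Zbeta_power_in_odd_prime_ideal[OF q w n] by blast
qed

lemma Zbeta_of_even_in_beta_ideal:
  assumes "even c0"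
  shows "Zbeta_of c0 c1 c2 c3 \<in> Zbeta_ideal \<beta>"
proof -
  obtain k where c0: "c0 = 2 * k"
    using assms by blast
  have "Zbeta_of c0 c1 c2 c3 = \<beta> * Zbeta_of c1 c2 c3 (- k)"
    unfolding c0 Zbeta_of_def using beta4 by simp algebra
  then show ?thesis
    by (simp add: Zbeta_idealI)
qed

lemma one_notin_beta_ideal: "1 \<notin> Zbeta_ideal \<beta>"
proof
  assume "1 \<in> Zbeta_ideal \<beta>"
  then obtain a0 a1 a2 a3 where "1 = \<beta> * Zbeta_of a0 a1 a2 a3"
    by (metis Zbeta_idealE ZbetaE)
  also have "\<dots> = Zbeta_of (-2 * a3) a0 a1 a2"
    unfolding Zbeta_of_def using beta4 by simp algebra
  finally have "Zbeta_of 1 0 0 0 = Zbeta_of (-2 * a3) a0 a1 a2"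
    by (simp add: Zbeta_of_def)
  then have "1 = -2 * a3"
    unfolding Zbeta_of_eq_iff by simp
  then show False
    by presburger
qed

lemma Zbeta_minus_one_in_beta_ideal:
  assumes "u \<in> Zbeta" "u \<notin> Zbeta_ideal \<beta>"
  shows "u - 1 \<in> Zbeta_ideal \<beta>"
proof -
  obtain c0 c1 c2 c3 where u: "u = Zbeta_of c0 c1 c2 c3"
    using assms(1) by (rule ZbetaE)
  then have "odd c0"
    using assms(2) Zbeta_of_even_in_beta_ideal by blast
  moreover have "u - 1 = Zbeta_of (c0 - 1) c1 c2 c3"
    unfolding u Zbeta_of_def by simp
  ultimately show ?thesis
    using Zbeta_of_even_in_beta_ideal by simp
qed

lemma Zbeta_power_notin_beta_ideal:
  assumes u: "u \<in> Zbeta" "u \<notin> Zbeta_ideal \<beta>"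
  shows "u ^ n \<notin> Zbeta_ideal \<beta>"
proof
  have "u ^ n - 1 \<in> Zbeta_ideal \<beta>"
  proof (induction n)
    case 0
    show ?case
      using Zbeta_idealI[OF Zbeta_0, of \<beta>] by simp
  next
    case (Suc n)
    have "u ^ Suc n - 1 = u ^ n * (u - 1) + (u ^ n - 1)"
      by (simp add: algebra_simps)
    also have "\<dots> \<in> Zbeta_ideal \<beta>"
      by (intro Zbeta_ideal_add Zbeta_ideal_mult Zbeta_minus_one_in_beta_ideal Zbeta_power u Suc.IH)
    finally show ?case .
  qed
  moreover assume "u ^ n \<in> Zbeta_ideal \<beta>"
  ultimately have "u ^ n - (u ^ n - 1) \<in> Zbeta_ideal \<beta>"
    using Zbeta_ideal_diff by blast
  then show False
    using one_notin_beta_ideal by simp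
qed

lemma Zbeta_beta_adic:
  assumes w: "w \<in> Zbeta"
  shows "w \<in> Zbeta_ideal 2 \<or> (\<exists>j<4. \<exists>u\<in>Zbeta. u \<notin> Zbeta_ideal \<beta> \<and> w = \<beta>^j * u)"
proof -
  have "w \<in> Zbeta_ideal (\<beta>^k) \<or> (\<exists>j<k. \<exists>u\<in>Zbeta. u \<notin> Zbeta_ideal \<beta> \<and> w = \<beta>^j * u)" for k
  proof (induction k)
    case 0
    show ?case
      using Zbeta_idealI[OF w, of 1] by simp
  next
    case (Suc k)
    show ?case
    proof (cases "w \<in> Zbeta_ideal (\<beta>^k)")
      case True
      then obtain u where u: "u \<in> Zbeta" "w = \<beta>^k * u"
        by (rule Zbeta_idealE)
      show ?thesis
      proof (cases "u \<in> Zbeta_ideal \<beta>")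
        case True
        then obtain v where "v \<in> Zbeta" "w = \<beta>^Suc k * v"
          using u by (auto elim: Zbeta_idealE)
        then show ?thesis
          using Zbeta_idealI by simp
      next
        case False
        with u show ?thesis
          by blast
      qed
    next
      case False
      with Suc.IH show ?thesis
        using less_SucI by blast
    qed
  qed
  moreover have "Zbeta_ideal (\<beta>^4) \<subseteq> Zbeta_ideal 2"
    using beta4 Zbeta_ideal_mono[of "-1" 2] Zbeta_of_int[of "-1"] by simp
  ultimately show ?thesis
    by blast
qed

lemma Zbeta_ideal_beta_power_mono:
  assumes "m \<le> n"
  shows "Zbeta_ideal (\<beta> ^ n) \<subseteq> Zbeta_ideal (\<beta> ^ m)"
proof -
  have "\<beta> ^ n = \<beta> ^ m * \<beta> ^ (n - m)"
    using assms by (simp flip: power_add)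
  then show ?thesis
    using Zbeta_ideal_mono[OF Zbeta_power[OF Zbeta_beta]] by simp
qed

lemma two_power_term_in_beta_ideal:
  assumes j: "j < 4" and k: "k < n" and u: "u \<in> Zbeta"
  shows "of_int c * 2 ^ (n - k) * (\<beta>^j * u)^k \<in> Zbeta_ideal (\<beta>^(j*n + 1))"
proof -
  have "(2::complex) ^ (n - k) = (-1) ^ (n - k) * \<beta> ^ (4 * (n - k))"
    using beta4 by (simp add: power_mult flip: power_mult_distrib)
  then have "of_int c * 2 ^ (n - k) * (\<beta>^j * u)^k
      = \<beta> ^ (4 * (n - k) + j * k) * (of_int (c * (-1) ^ (n - k)) * u^k)"
    by (simp add: power_mult_distrib power_add power_mult algebra_simps)
  also have "\<dots> \<in> Zbeta_ideal (\<beta> ^ (4 * (n - k) + j * k))"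
    by (intro Zbeta_idealI Zbeta_mult Zbeta_of_int Zbeta_power u)
  also have "\<dots> \<subseteq> Zbeta_ideal (\<beta>^(j*n + 1))"
  proof (rule Zbeta_ideal_beta_power_mono)
    obtain t where t: "n = k + t" "t \<ge> 1"
      using k by (metis le_add_diff_inverse less_imp_le_nat zero_less_diff less_one not_le)
    have "j * t \<le> 3 * t"
      using j by simp
    moreover have "n - k = t" "j * n = j * k + j * t"
      using t(1) by (simp_all add: distrib_left)
    ultimately show "j * n + 1 \<le> 4 * (n - k) + j * k"
      using t(2) by linarith
  qed
  finally show ?thesis .
qed

text \<open>The Eisenstein argument at \<open>2 = -\<beta>\<^sup>4\<close>: if \<open>w = \<beta>\<^sup>j u\<close> with \<open>j < 4\<close> and \<open>\<beta> \<nmid> u\<close>, then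
  \<open>\<beta>\<^sup>j\<^sup>n\<^sup>+\<^sup>1\<close> divides every term on the right but not \<open>w\<^sup>n\<close>.\<close>
lemma Zbeta_integral_quotient_two:
  assumes w: "w \<in> Zbeta"
    and eq: "w^n = (\<Sum>k<n. of_int (g k) * 2 ^ (n - k) * w^k)"
  shows "w \<in> Zbeta_ideal 2"
proof (rule ccontr)
  assume "w \<notin> Zbeta_ideal 2"
  then obtain j u where j: "j < 4" and u: "u \<in> Zbeta" "u \<notin> Zbeta_ideal \<beta>" and w_eq: "w = \<beta>^j * u"
    using Zbeta_beta_adic[OF w] by blast
  have "w^n \<in> Zbeta_ideal (\<beta>^(j*n + 1))"
    unfolding eq by (rule Zbeta_ideal_sum) (unfold w_eq, rule two_power_term_in_beta_ideal[OF j _ u(1)], simp)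
  moreover have "w^n = \<beta>^(j*n) * u^n"
    unfolding w_eq by (simp add: power_mult_distrib power_mult)
  ultimately obtain z where z: "z \<in> Zbeta" "\<beta>^(j*n) * u^n = \<beta>^(j*n + 1) * z"
    by (metis Zbeta_idealE)
  then have "\<beta>^(j*n) * u^n = \<beta>^(j*n) * (\<beta> * z)"
    by (simp add: ac_simps)
  then have "u^n \<in> Zbeta_ideal \<beta>"
    using beta_nonzero Zbeta_idealI[OF z(1)] by simp
  with Zbeta_power_notin_beta_ideal[OF u] show False
    by blast
qed

text \<open>The hypothesis says that \<open>w/p\<close> is an algebraic integer, so \<open>\<int>[\<beta>]\<close> is maximal at \<open>p\<close>.\<close>
lemma Zbeta_integral_quotient:
  assumes p: "prime p" and w: "w \<in> Zbeta" and n: "n \<ge> 1"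
    and eq: "w^n = (\<Sum>k<n. of_int (g k) * of_nat p ^ (n - k) * w^k)"
  shows "w \<in> Zbeta_ideal (of_nat p)"
proof (cases "p = 2")
  case True
  then show ?thesis
    using Zbeta_integral_quotient_two[OF w, of n g] eq by simp
next
  case False
  then have "prime (int p)" "odd (int p)"
    using p prime_odd_nat[OF p] prime_ge_2_nat[OF p] by auto
  then show ?thesis
    using Zbeta_integral_quotient_odd[OF _ _ w n, of "int p" g] eq by simp
qed

lemma OK_prime_multiple_cancel:
  assumes x: "x \<in> OK \<beta>" and p: "prime p" and px: "of_nat (p * m) * x \<in> Zbeta"
  shows "of_nat m * x \<in> Zbeta"
proof -
  obtain n g where n: "n \<ge> 1" and rel: "x ^ n = (\<Sum>k<n. of_int (g k) * x ^ k)"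
    using x algebraic_int_power_eq unfolding OK_def by blast
  have "(of_nat (p * m) * x) ^ n
      = (\<Sum>k<n. of_int (g k) * of_nat (p * m) ^ (n - k) * (of_nat (p * m) * x) ^ k)"
    by (rule monic_relation_scale[OF rel])
  also have "\<dots> = (\<Sum>k<n. of_int (g k * int m ^ (n - k)) * of_nat p ^ (n - k) * (of_nat (p * m) * x) ^ k)"
    by (intro sum.cong) (simp_all add: power_mult_distrib)
  finally have "of_nat (p * m) * x \<in> Zbeta_ideal (of_nat p)"
    by (rule Zbeta_integral_quotient[OF p px n])
  then obtain z where "z \<in> Zbeta" "of_nat p * (of_nat m * x) = of_nat p * z"
    by (auto elim: Zbeta_idealE)
  then show ?thesis
    using p by (simp add: prime_gt_0_nat)
qed

lemma OK_prime_local: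
  assumes x: "x \<in> OK \<beta>" and p: "prime p"
  obtains m :: nat where "\<not> p dvd m" "of_nat m * x \<in> Zbeta"
proof -
  define S where "S = {m :: nat. m > 0 \<and> of_nat m * x \<in> Zbeta}"
  obtain m0 where "m0 \<in> S"
    using x QF_denominator unfolding OK_def S_def by blast
  define m where "m = (LEAST m. m \<in> S)"
  have m: "m \<in> S"
    unfolding m_def using \<open>m0 \<in> S\<close> by (rule LeastI)
  have "\<not> p dvd m"
  proof
    assume "p dvd m"
    then obtain m' where m': "m = p * m'" ..
    then have "m' \<in> S"
      using m OK_prime_multiple_cancel[OF x p] unfolding S_def by auto
    moreover have "m' < m"
      using m m' prime_gt_1_nat[OF p] unfolding S_def by auto
    ultimately show False
      unfolding m_def using not_less_Least by blast
  qed
  with m that show ?thesis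
    unfolding S_def by blast
qed

lemma Zbeta_of_congruent_eval:
  "Zbeta_of h0 h1 h2 h3 - of_int (h0 + h1 * d + h2 * d^2 + h3 * d^3) \<in> Zbeta_ideal (of_int d - \<beta>)"
proof -
  have "Zbeta_of h0 h1 h2 h3 - of_int (h0 + h1 * d + h2 * d^2 + h3 * d^3)
      = (of_int d - \<beta>) * Zbeta_of (- (h1 + h2 * d + h3 * d^2)) (- (h2 + h3 * d)) (- h3) 0"
    unfolding Zbeta_of_def by simp algebra
  then show ?thesis
    by (simp add: Zbeta_idealI)
qed

lemma norm_in_Zbeta_ideal: "of_int (d^4 + 2) \<in> Zbeta_ideal (of_int d - \<beta>)"
proof -
  have "of_int (d^4 + 2) = (of_int d - \<beta>) * Zbeta_of (d^3) (d^2) d 1"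
    unfolding Zbeta_of_def using beta4 by simp algebra
  then show ?thesis
    by (simp add: Zbeta_idealI)
qed

lemma Zbeta_ideal_subset_ideal:
  assumes "is_ideal (OK \<beta>) P" "a \<in> P"
  shows "Zbeta_ideal a \<subseteq> P"
proof
  fix x assume "x \<in> Zbeta_ideal a"
  then obtain z where "z \<in> Zbeta" "x = z * a"
    by (auto elim: Zbeta_idealE simp: mult.commute)
  then show "x \<in> P"
    using assms Zbeta_subset_OK unfolding is_ideal_def by blast
qed

lemma OK_congruent_int:
  assumes P: "is_ideal (OK \<beta>) P" and d: "of_int d - \<beta> \<in> P"
    and p: "prime p" "of_nat p \<in> P" and x: "x \<in> OK \<beta>"
  shows "\<exists>k. x - of_int k \<in> P"
proof -
  have P_mult: "r * y \<in> P" if "r \<in> OK \<beta>" "y \<in> P" for r y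
    using P that unfolding is_ideal_def by blast
  have P_add: "y + y' \<in> P" if "y \<in> P" "y' \<in> P" for y y'
    using P that unfolding is_ideal_def by blast
  obtain m where "\<not> p dvd m" and mx: "of_nat m * x \<in> Zbeta"
    using OK_prime_local[OF x p(1)] .
  then obtain s t where st: "s * int p + t * int m = 1"
    using bezout_int[of "int p" "int m"] prime_imp_coprime[OF p(1)] by auto
  obtain h0 h1 h2 h3 where h: "of_nat m * x = Zbeta_of h0 h1 h2 h3"
    using mx by (rule ZbetaE)
  define c where "c = h0 + h1 * d + h2 * d^2 + h3 * d^3"
  have "of_nat m * x - of_int c \<in> P"
    using Zbeta_of_congruent_eval[of h0 h1 h2 h3 d] Zbeta_ideal_subset_ideal[OF P d]
    unfolding h c_def by blast
  moreover have "of_int s * (x * of_nat p) \<in> P"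
    using P_mult[OF OK_of_int P_mult[OF x p(2)]] .
  moreover have "x - of_int (t * c) = of_int s * (x * of_nat p) + of_int t * (of_nat m * x - of_int c)"
  proof -
    have "x = x * of_int (s * int p + t * int m)"
      using st by simp
    then show ?thesis
      by (simp add: algebra_simps)
  qed
  ultimately show ?thesis
    using P_add P_mult[OF OK_of_int] by metis
qed

end

theorem proposition4:
  fixes \<beta> :: complex and d :: int and P :: "complex set"
  assumes "\<beta> ^ 4 + 2 = 0"
    and "is_prime_ideal (OK \<beta>) P"
    and "of_int d - \<beta> \<in> P"
  shows "residue_degree (OK \<beta>) P = 1"
proof -
  interpret X4_plus_2_root \<beta>
    using assms(1) by unfold_locales
  have ideal: "is_ideal (OK \<beta>) P"
    using assms(2) unfolding is_prime_ideal_def by blast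
  have "of_int (d^4 + 2) \<in> P"
    using norm_in_Zbeta_ideal Zbeta_ideal_subset_ideal[OF ideal assms(3)] by blast
  moreover have "d^4 + 2 > 0"
    by (simp add: add_nonneg_pos)
  ultimately obtain p where p: "prime p" "of_nat p \<in> P"
    using prime_ideal_contains_prime[OF assms(2) OK_of_int] by (metis less_irrefl)
  have P_int: "of_int k \<in> P \<longleftrightarrow> int p dvd k" for k
    using ideal_int_members[OF ideal prime_ideal_one_notin[OF assms(2)] OK_of_int p] .
  show ?thesis
    using residue_degree_eq_1[OF ideal OK_of_int p(1) P_int] OK_congruent_int[OF ideal assms(3) p] by blast
qed

end
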